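(* Let $\{Q_j\}_{j=1}^{d^2}$ be an NQPR in dimension $d$ and let $U$ be a unitary on $\mathbb{C}^d$. Then all entries of the matrix $U^Q_{jk}=\operatorname{tr}(Q_jUQ_kU^\dagger)/d$ are nonnegative if and only if $U$ belongs to the symmetry group of $\{Q_j\}$.
   Context: An NQPR in dimension $d$ is a family $\{Q_j\}_{j=1}^{d^2}$ of Hermitian operators on $\mathbb{C}^d$ with $\operatorname{tr}(Q_j)=1$ and $\operatorname{tr}(Q_jQ_k)=d\,\delta_{jk}$. Its symmetry group is the group of all unitaries $U$ on $\mathbb{C}^d$ such that $\{UQ_jU^\dagger\}_j=\{Q_j\}_j$ as sets. *)

theory Defs
  imports "Jordan_Normal_Form.Schur_Decomposition"
begin

definition mtrace :: "complex mat \<Rightarrow> complex" where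
  "mtrace A = (\<Sum>i<dim_row A. A $$ (i, i))"

definition hermitian_mat :: "complex mat \<Rightarrow> bool" where
  "hermitian_mat A \<longleftrightarrow> A \<in> carrier_mat (dim_row A) (dim_row A) \<and> mat_adjoint A = A"

definition unitary_mat :: "nat \<Rightarrow> complex mat \<Rightarrow> bool" where
  "unitary_mat d U \<longleftrightarrow> U \<in> carrier_mat d d \<and> U * mat_adjoint U = 1\<^sub>m d \<and> mat_adjoint U * U = 1\<^sub>m d"

text \<open>An NQPR in dimension d, indexed by j = 0, ..., d^2 - 1.\<close>
definition NQPR :: "nat \<Rightarrow> (nat \<Rightarrow> complex mat) \<Rightarrow> bool" where
  "NQPR d Q \<longleftrightarrow>
     (\<forall>j<d^2. Q j \<in> carrier_mat d d \<and> hermitian_mat (Q j) \<and> mtrace (Q j) = 1) \<and>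
     (\<forall>j<d^2. \<forall>k<d^2. mtrace (Q j * Q k) = (if j = k then of_nat d else 0))"

definition symmetry_group :: "nat \<Rightarrow> (nat \<Rightarrow> complex mat) \<Rightarrow> complex mat set" where
  "symmetry_group d Q = {U. unitary_mat d U \<and>
     (\<lambda>j. U * Q j * mat_adjoint U) ` {..<d^2} = Q ` {..<d^2}}"

end

theory Submission
  imports Defs
begin

text \<open>The family \<open>Q\<close> is an orthogonal basis of \<open>d \<times> d\<close> matrices for the Hilbert--Schmidt
  inner product, which yields the expansion \<open>\<Sum>\<^sub>j tr(Q\<^sub>j A) tr(Q\<^sub>j B) = d tr(AB)\<close>.
  For \<open>X = U Q\<^sub>k U\<^sup>\<dagger>\<close> the numbers \<open>c\<^sub>j = tr(Q\<^sub>j X)/d\<close> therefore satisfy \<open>\<Sum> c\<^sub>j = tr X = 1\<close> and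
  \<open>\<Sum> c\<^sub>j\<^sup>2 = tr(X\<^sup>2)/d = 1\<close>. If they are nonnegative, one of them equals 1 and the others vanish;
  then \<open>\<parallel>X - Q\<^sub>j\<parallel>\<^sup>2 = 0\<close>, i.e. \<open>X = Q\<^sub>j\<close>. Since \<open>k \<mapsto> U Q\<^sub>k U\<^sup>\<dagger>\<close> is injective, it permutes the
  family. Conversely, for a symmetry every entry is \<open>tr(Q\<^sub>j Q\<^sub>i)/d \<in> {0, 1}\<close>.\<close>

lemma carrier_mat_adjoint: "A \<in> carrier_mat n m \<Longrightarrow> mat_adjoint A \<in> carrier_mat m n"
  unfolding mat_adjoint_def by auto

lemma index_mat_adjoint:
  "A \<in> carrier_mat n m \<Longrightarrow> i < m \<Longrightarrow> j < n \<Longrightarrow> mat_adjoint A $$ (i, j) = cnj (A $$ (j, i))"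
  unfolding mat_adjoint_def mat_of_rows_def by (auto simp: col_def)

lemma mat_adjoint_mat_adjoint:
  fixes A :: "complex mat"
  assumes "A \<in> carrier_mat n m"
  shows "mat_adjoint (mat_adjoint A) = A"
  using assms carrier_mat_adjoint[OF assms] carrier_mat_adjoint[OF carrier_mat_adjoint[OF assms]]
  by (intro eq_matI) (auto simp: index_mat_adjoint)

lemma mat_adjoint_mult:
  fixes A B :: "complex mat"
  assumes A: "A \<in> carrier_mat n m" and B: "B \<in> carrier_mat m p"
  shows "mat_adjoint (A * B) = mat_adjoint B * mat_adjoint A"
proof (rule eq_matI)
  fix i j assume "i < dim_row (mat_adjoint B * mat_adjoint A)" "j < dim_col (mat_adjoint B * mat_adjoint A)"
  then have i: "i < p" and j: "j < n"
    using carrier_mat_adjoint[OF A] carrier_mat_adjoint[OF B] by auto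
  have "mat_adjoint (A * B) $$ (i, j) = (\<Sum>k<m. cnj (A $$ (j, k)) * cnj (B $$ (k, i)))"
    using A B i j by (simp add: index_mat_adjoint[of "A * B" n p] scalar_prod_def atLeast0LessThan)
  also have "\<dots> = (mat_adjoint B * mat_adjoint A) $$ (i, j)"
    using A B i j carrier_mat_adjoint[OF A] carrier_mat_adjoint[OF B]
    by (simp add: scalar_prod_def atLeast0LessThan index_mat_adjoint[OF A] index_mat_adjoint[OF B] mult.commute)
  finally show "mat_adjoint (A * B) $$ (i, j) = (mat_adjoint B * mat_adjoint A) $$ (i, j)" .
qed (use A B carrier_mat_adjoint[OF A] carrier_mat_adjoint[OF B] carrier_mat_adjoint[of "A * B" n p] in auto)

lemma hermitian_mat_index:
  "hermitian_mat A \<Longrightarrow> i < dim_row A \<Longrightarrow> j < dim_row A \<Longrightarrow> A $$ (i, j) = cnj (A $$ (j, i))"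
  unfolding hermitian_mat_def by (metis index_mat_adjoint complex_cnj_cnj)

lemma mtrace_mult:
  "A \<in> carrier_mat n m \<Longrightarrow> B \<in> carrier_mat m n \<Longrightarrow>
   mtrace (A * B) = (\<Sum>i<n. \<Sum>k<m. A $$ (i, k) * B $$ (k, i))"
  unfolding mtrace_def by (auto simp: scalar_prod_def intro!: sum.cong atLeast0LessThan)

lemma mtrace_mult_commute:
  "A \<in> carrier_mat n m \<Longrightarrow> B \<in> carrier_mat m n \<Longrightarrow> mtrace (A * B) = mtrace (B * A)"
  unfolding mtrace_mult[of A n m B] mtrace_mult[of B m n A] by (subst sum.swap) (simp add: mult.commute)

lemma mtrace_mult_hermitian:
  assumes "hermitian_mat A" "A \<in> carrier_mat d d" "B \<in> carrier_mat d d"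
  shows "mtrace (B * A) = (\<Sum>i<d. \<Sum>k<d. B $$ (i, k) * cnj (A $$ (i, k)))"
  unfolding mtrace_mult[OF assms(3,2)]
proof (intro sum.cong refl)
  fix i k assume "i \<in> {..<d}" "k \<in> {..<d}"
  then show "B $$ (i, k) * A $$ (k, i) = B $$ (i, k) * cnj (A $$ (i, k))"
    using hermitian_mat_index[OF assms(1), of k i] assms(2) by simp
qed

text \<open>The left-hand side is the squared Hilbert--Schmidt norm of \<open>A - B\<close>.\<close>

lemma hermitian_mat_eqI_mtrace:
  assumes A: "A \<in> carrier_mat d d" and B: "B \<in> carrier_mat d d"
    and hA: "hermitian_mat A" and hB: "hermitian_mat B"
    and t: "mtrace (A * A) - mtrace (A * B) - mtrace (B * A) + mtrace (B * B) = 0"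
  shows "A = B"
proof -
  define w where "w i k = A $$ (i, k) - B $$ (i, k)" for i k
  have "(\<Sum>i<d. \<Sum>k<d. w i k * cnj (w i k)) =
      mtrace (A * A) - mtrace (A * B) - mtrace (B * A) + mtrace (B * B)"
    unfolding mtrace_mult_hermitian[OF hA A A] mtrace_mult_hermitian[OF hB B A]
      mtrace_mult_hermitian[OF hA A B] mtrace_mult_hermitian[OF hB B B] w_def
    by (simp add: algebra_simps sum_subtractf sum.distrib)
  also have "(\<Sum>i<d. \<Sum>k<d. w i k * cnj (w i k)) = of_real (\<Sum>i<d. \<Sum>k<d. (cmod (w i k))\<^sup>2)"
    by (simp flip: complex_norm_square)
  finally have "(\<Sum>i<d. \<Sum>k<d. (cmod (w i k))\<^sup>2) = 0"
    using t by (simp only: of_real_eq_0_iff)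
  then have "w i k = 0" if "i < d" "k < d" for i k
    using that by (simp add: sum_nonneg_eq_0_iff sum_nonneg)
  then show ?thesis using A B by (intro eq_matI) (auto simp: w_def)
qed

lemma mult_add_less_mult:
  fixes a b d m :: nat
  assumes "a < m" "b < d"
  shows "a * d + b < m * d"
proof -
  have "a * d + b < (a + 1) * d" using assms by simp
  also have "\<dots> \<le> m * d" using assms by (intro mult_le_mono1) simp
  finally show ?thesis .
qed

lemma bij_betw_div_mod:
  fixes d m :: nat
  shows "bij_betw (\<lambda>p. (p div d, p mod d)) {..<m * d} ({..<m} \<times> {..<d})"
proof (rule bij_betw_byWitness[where f' = "\<lambda>(a, b). a * d + b"])
  show "(\<lambda>p. (p div d, p mod d)) ` {..<m * d} \<subseteq> {..<m} \<times> {..<d}"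
    by (auto simp: less_mult_imp_div_less intro!: mod_less_divisor gr0I)
qed (auto simp: mult_add_less_mult)

lemma sum_lessThan_mult_div_mod:
  fixes f :: "nat \<Rightarrow> nat \<Rightarrow> 'a::comm_monoid_add"
  shows   "(\<Sum>p<m * d. f (p div d) (p mod d)) = (\<Sum>a<m. \<Sum>b<d. f a b)"
  using sum.reindex_bij_betw[OF bij_betw_div_mod, of "case_prod f"] by (simp add: sum.cartesian_product)

lemma NQPR_D:
  assumes "NQPR d Q" "j < d\<^sup>2"
  shows "Q j \<in> carrier_mat d d" "hermitian_mat (Q j)" "mtrace (Q j) = 1"
  using assms unfolding NQPR_def by auto

lemma NQPR_mtrace_mult:
  "NQPR d Q \<Longrightarrow> j < d\<^sup>2 \<Longrightarrow> k < d\<^sup>2 \<Longrightarrow> mtrace (Q j * Q k) = (if j = k then of_nat d else 0)"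
  unfolding NQPR_def by auto

text \<open>Orthogonality says \<open>G G\<^sup>\<dagger> = d\<close> for the \<open>d\<^sup>2 \<times> d\<^sup>2\<close> matrix \<open>G\<close> whose rows are the vectorised \<open>Q\<^sub>j\<close>;
  a one-sided inverse of a square matrix is two-sided, so also \<open>G\<^sup>\<dagger> G = d\<close>.\<close>

lemma NQPR_completeness:
  assumes N: "NQPR d Q" and ab: "a < d" "b < d" "a' < d" "b' < d"
  shows "(\<Sum>j<d\<^sup>2. cnj (Q j $$ (a, b)) * Q j $$ (a', b')) = (if (a, b) = (a', b') then of_nat d else 0)"
proof -
  define n where "n = d * d"
  have n: "d\<^sup>2 = n" and d0: "d > 0" using ab by (auto simp: n_def power2_eq_square)
  define G where "G = mat n n (\<lambda>(j, p). Q j $$ (p div d, p mod d))"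
  define H where "H = mat n n (\<lambda>(p, k). cnj (Q k $$ (p div d, p mod d)) / of_nat d)"
  have "G * H = 1\<^sub>m n"
  proof (rule eq_matI)
    fix j k assume "j < dim_row (1\<^sub>m n)" "k < dim_col (1\<^sub>m n)"
    then have j: "j < d\<^sup>2" and k: "k < d\<^sup>2" using n by auto
    have "(G * H) $$ (j, k) = (\<Sum>p<d * d. Q j $$ (p div d, p mod d) * cnj (Q k $$ (p div d, p mod d)) / of_nat d)"
      using j k n unfolding G_def H_def n_def by (simp add: scalar_prod_def atLeast0LessThan)
    also have "\<dots> = (\<Sum>a<d. \<Sum>b<d. Q j $$ (a, b) * cnj (Q k $$ (a, b)) / of_nat d)"
      by (rule sum_lessThan_mult_div_mod)
    also have "\<dots> = mtrace (Q j * Q k) / of_nat d"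
      by (simp add: sum_divide_distrib
          mtrace_mult_hermitian[OF NQPR_D(2,1)[OF N k] NQPR_D(1)[OF N j]])
    finally show "(G * H) $$ (j, k) = 1\<^sub>m n $$ (j, k)"
      using NQPR_mtrace_mult[OF N j k] j k n d0 by simp
  qed (auto simp: G_def H_def)
  then have HG: "H * G = 1\<^sub>m n"
    by (rule mat_mult_left_right_inverse[rotated 2]) (auto simp: G_def H_def)
  have p: "a * d + b < n" "(a * d + b) div d = a" "(a * d + b) mod d = b"
    and q: "a' * d + b' < n" "(a' * d + b') div d = a'" "(a' * d + b') mod d = b'"
    using ab by (auto simp: n_def mult_add_less_mult)
  have "(\<Sum>j<d\<^sup>2. cnj (Q j $$ (a, b)) * Q j $$ (a', b')) / of_nat d = (H * G) $$ (a * d + b, a' * d + b')"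
    using p q n unfolding G_def H_def by (simp add: scalar_prod_def atLeast0LessThan sum_divide_distrib)
  also have "\<dots> = (if (a, b) = (a', b') then 1 else 0)"
    using HG p q by auto
  finally show ?thesis using d0 by (auto simp: field_simps split: if_splits)
qed

lemma NQPR_sum_mtrace_mult:
  assumes N: "NQPR d Q" and A: "A \<in> carrier_mat d d" and B: "B \<in> carrier_mat d d"
  shows "(\<Sum>j<d\<^sup>2. mtrace (Q j * A) * mtrace (Q j * B)) = of_nat d * mtrace (A * B)"
proof -
  define S where "S = {..<d} \<times> {..<d}"
  have "finite S" unfolding S_def by simp
  have trA: "mtrace (Q j * A) = (\<Sum>x\<in>S. cnj (Q j $$ x) * A $$ x)" if j: "j < d\<^sup>2" for j
  proof -
    have "mtrace (Q j * A) = mtrace (A * Q j)"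
      using NQPR_D(1)[OF N j] A by (rule mtrace_mult_commute)
    also have "\<dots> = (\<Sum>x\<in>S. A $$ x * cnj (Q j $$ x))"
      unfolding mtrace_mult_hermitian[OF NQPR_D(2,1)[OF N j] A] S_def
      by (simp add: sum.cartesian_product case_prod_beta')
    finally show ?thesis by (simp add: mult.commute)
  qed
  have trB: "mtrace (Q j * B) = (\<Sum>y\<in>S. Q j $$ y * B $$ (snd y, fst y))" if j: "j < d\<^sup>2" for j
    using mtrace_mult[OF NQPR_D(1)[OF N j] B] unfolding S_def
    by (simp add: sum.cartesian_product case_prod_beta')
  have complete: "(\<Sum>j<d\<^sup>2. cnj (Q j $$ x) * Q j $$ y) = (if x = y then of_nat d else 0)"
    if "x \<in> S" "y \<in> S" for x y
    using NQPR_completeness[OF N, of "fst x" "snd x" "fst y" "snd y"] that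
    unfolding S_def by (auto split: if_splits)
  have "(\<Sum>j<d\<^sup>2. mtrace (Q j * A) * mtrace (Q j * B))
      = (\<Sum>j<d\<^sup>2. \<Sum>x\<in>S. \<Sum>y\<in>S. cnj (Q j $$ x) * A $$ x * (Q j $$ y * B $$ (snd y, fst y)))"
    by (simp add: trA trB sum_product)
  also have "\<dots> = (\<Sum>x\<in>S. \<Sum>y\<in>S. \<Sum>j<d\<^sup>2. cnj (Q j $$ x) * A $$ x * (Q j $$ y * B $$ (snd y, fst y)))"
    by (subst sum.swap) (simp add: sum.swap[of _ S "{..<d\<^sup>2}"])
  also have "\<dots> = (\<Sum>x\<in>S. \<Sum>y\<in>S. A $$ x * B $$ (snd y, fst y) * (\<Sum>j<d\<^sup>2. cnj (Q j $$ x) * Q j $$ y))"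
    by (simp add: sum_distrib_left mult_ac)
  also have "\<dots> = (\<Sum>x\<in>S. of_nat d * (A $$ x * B $$ (snd x, fst x)))"
    by (intro sum.cong refl) (simp add: complete if_distrib sum.delta[OF \<open>finite S\<close>]
        cong: if_cong, simp add: S_def)
  also have "\<dots> = of_nat d * mtrace (A * B)"
    unfolding mtrace_mult[OF A B] S_def
    by (simp add: sum.cartesian_product case_prod_beta' sum_distrib_left)
  finally show ?thesis .
qed

text \<open>If the weights sum to \<open>s\<close> and their squares to \<open>s\<^sup>2\<close>, then \<open>\<Sum> r\<^sub>j (s - r\<^sub>j) = 0\<close> with
  nonnegative summands, so every weight is \<open>0\<close> or \<open>s\<close>.\<close>

lemma ex_eq_sum_if_sum_power2_eq:
  fixes r :: "nat \<Rightarrow> real"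
  assumes nonneg: "\<And>j. j < n \<Longrightarrow> 0 \<le> r j"
    and sum: "(\<Sum>j<n. r j) = s" and sum_sq: "(\<Sum>j<n. (r j)\<^sup>2) = s\<^sup>2" and "s \<noteq> 0"
  shows "\<exists>j<n. r j = s"
proof (rule ccontr)
  assume none: "\<not> (\<exists>j<n. r j = s)"
  have "r j \<le> s" if "j < n" for j
  proof -
    have "(r j)\<^sup>2 \<le> s\<^sup>2"
      using member_le_sum[of j "{..<n}" "\<lambda>j. (r j)\<^sup>2"] that sum_sq by simp
    moreover have "0 \<le> s" using sum nonneg by (metis lessThan_iff sum_nonneg)
    ultimately show ?thesis using power2_le_imp_le by blast
  qed
  then have term_nonneg: "0 \<le> r j * (s - r j)" if "j \<in> {..<n}" for j
    using nonneg that by simp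
  have "(\<Sum>j<n. r j * (s - r j)) = s * s - s\<^sup>2"
    using sum sum_sq by (simp add: algebra_simps sum_subtractf power2_eq_square flip: sum_distrib_left)
  then have "\<forall>j\<in>{..<n}. r j * (s - r j) = 0"
    using sum_nonneg_eq_0_iff[OF finite_lessThan term_nonneg] by (simp add: power2_eq_square)
  then have "\<forall>j\<in>{..<n}. r j = 0" using none by auto
  then show False using sum \<open>s \<noteq> 0\<close> by simp
qed

lemma unitary_conj_mult:
  assumes "unitary_mat d U" "A \<in> carrier_mat d d" "B \<in> carrier_mat d d"
  shows "U * A * mat_adjoint U * (U * B * mat_adjoint U) = U * (A * B) * mat_adjoint U"
proof -
  have U: "U \<in> carrier_mat d d" "mat_adjoint U * U = 1\<^sub>m d"
    using assms(1) unfolding unitary_mat_def by auto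
  note carrier = U(1) carrier_mat_adjoint[OF U(1)] assms(2,3)
  have "U * A * mat_adjoint U * (U * B * mat_adjoint U) = U * A * (mat_adjoint U * U) * B * mat_adjoint U"
    using carrier by (simp add: assoc_mult_mat[of _ d d _ d _ d])
  also have "\<dots> = U * (A * B) * mat_adjoint U"
    using carrier by (simp add: U(2) assoc_mult_mat[of _ d d _ d _ d])
  finally show ?thesis .
qed

lemma mtrace_unitary_conj:
  assumes "unitary_mat d U" "A \<in> carrier_mat d d"
  shows "mtrace (U * A * mat_adjoint U) = mtrace A"
proof -
  have U: "U \<in> carrier_mat d d" "mat_adjoint U * U = 1\<^sub>m d"
    using assms(1) unfolding unitary_mat_def by auto
  note carrier = U(1) carrier_mat_adjoint[OF U(1)] assms(2)
  have "mtrace (U * A * mat_adjoint U) = mtrace (U * (A * mat_adjoint U))"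
    using carrier by (simp add: assoc_mult_mat[of _ d d _ d _ d])
  also have "\<dots> = mtrace (A * mat_adjoint U * U)"
    using carrier by (intro mtrace_mult_commute[of _ d d]) auto
  also have "\<dots> = mtrace A"
    using carrier by (simp add: U(2) assoc_mult_mat[of _ d d _ d _ d])
  finally show ?thesis .
qed

lemma hermitian_unitary_conj:
  assumes "unitary_mat d U" "A \<in> carrier_mat d d" "hermitian_mat A"
  shows "hermitian_mat (U * A * mat_adjoint U)"
proof -
  have U: "U \<in> carrier_mat d d" using assms(1) unfolding unitary_mat_def by auto
  note carrier = U carrier_mat_adjoint[OF U] assms(2)
  have "mat_adjoint (U * A * mat_adjoint U) = mat_adjoint (mat_adjoint U) * mat_adjoint (U * A)"
    using carrier by (intro mat_adjoint_mult[of _ d d]) auto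
  also have "\<dots> = U * A * mat_adjoint U"
    using carrier assms(3) unfolding hermitian_mat_def
    by (simp add: mat_adjoint_mat_adjoint mat_adjoint_mult[of U d d A] assoc_mult_mat[of _ d d _ d _ d])
  finally show ?thesis using carrier unfolding hermitian_mat_def by simp
qed

lemma NQPR_unitary_conj:
  assumes N: "NQPR d Q" and U: "unitary_mat d U"
  shows "NQPR d (\<lambda>k. U * Q k * mat_adjoint U)"
  unfolding NQPR_def
proof (intro conjI allI impI)
  fix j assume j: "j < d\<^sup>2"
  have "U \<in> carrier_mat d d" using U unfolding unitary_mat_def by auto
  then show "U * Q j * mat_adjoint U \<in> carrier_mat d d"
    using NQPR_D(1)[OF N j] carrier_mat_adjoint by (metis mult_carrier_mat)
  show "hermitian_mat (U * Q j * mat_adjoint U)"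
    using hermitian_unitary_conj[OF U NQPR_D(1,2)[OF N j]] .
  show "mtrace (U * Q j * mat_adjoint U) = 1"
    using mtrace_unitary_conj[OF U NQPR_D(1)[OF N j]] NQPR_D(3)[OF N j] by simp
  fix k assume k: "k < d\<^sup>2"
  have "mtrace (U * Q j * mat_adjoint U * (U * Q k * mat_adjoint U)) = mtrace (Q j * Q k)"
    unfolding unitary_conj_mult[OF U NQPR_D(1)[OF N j] NQPR_D(1)[OF N k]]
    using NQPR_D(1)[OF N j] NQPR_D(1)[OF N k] by (intro mtrace_unitary_conj[OF U]) auto
  then show "mtrace (U * Q j * mat_adjoint U * (U * Q k * mat_adjoint U)) = (if j = k then of_nat d else 0)"
    using NQPR_mtrace_mult[OF N j k] by simp
qed

lemma NQPR_mem_if_mtrace_mult_nonneg: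
  assumes N: "NQPR d Q" and X: "X \<in> carrier_mat d d" "hermitian_mat X"
    and tr: "mtrace X = 1" and tr_sq: "mtrace (X * X) = of_nat d"
    and nonneg: "\<And>j. j < d\<^sup>2 \<Longrightarrow> 0 \<le> mtrace (Q j * X)"
  shows "X \<in> Q ` {..<d\<^sup>2}"
proof -
  have "d \<noteq> 0"
  proof
    assume "d = 0"
    then show False using tr X(1) unfolding mtrace_def by simp
  qed
  define r where "r j = Re (mtrace (Q j * X))" for j
  have overlap: "mtrace (Q j * X) = of_real (r j)" "0 \<le> r j" if "j < d\<^sup>2" for j
    using nonneg[OF that] unfolding r_def by (auto simp: less_eq_complex_def complex_eq_iff)
  have "mtrace (Q j * 1\<^sub>m d) = 1" if "j < d\<^sup>2" for j
    using NQPR_D(1,3)[OF N that] by simp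
  then have "(\<Sum>j<d\<^sup>2. mtrace (Q j * X) * mtrace (Q j * 1\<^sub>m d)) = of_real (\<Sum>j<d\<^sup>2. r j)"
    unfolding of_real_sum by (intro sum.cong) (simp_all add: overlap)
  then have "of_real (\<Sum>j<d\<^sup>2. r j) = (of_nat d :: complex)"
    using NQPR_sum_mtrace_mult[OF N X(1) one_carrier_mat] X(1) tr by simp
  then have sum: "(\<Sum>j<d\<^sup>2. r j) = real d"
    by (metis of_real_eq_iff of_real_of_nat_eq)
  have "of_real (\<Sum>j<d\<^sup>2. (r j)\<^sup>2) = (of_nat d * of_nat d :: complex)"
    using NQPR_sum_mtrace_mult[OF N X(1) X(1)] tr_sq by (simp add: overlap power2_eq_square)
  then have sum_sq: "(\<Sum>j<d\<^sup>2. (r j)\<^sup>2) = (real d)\<^sup>2"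
    by (metis of_nat_mult of_real_eq_iff of_real_of_nat_eq power2_eq_square)
  obtain j where j: "j < d\<^sup>2" "r j = real d"
    using ex_eq_sum_if_sum_power2_eq[OF overlap(2) sum sum_sq] \<open>d \<noteq> 0\<close> by auto
  have "mtrace (Q j * X) = of_nat d" "mtrace (X * Q j) = of_nat d"
    using overlap(1)[OF j(1)] j(2) mtrace_mult_commute[OF NQPR_D(1)[OF N j(1)] X(1)] by simp_all
  then have "X = Q j"
    using NQPR_D(1,2)[OF N j(1)] X tr_sq NQPR_mtrace_mult[OF N j(1) j(1)]
    by (intro hermitian_mat_eqI_mtrace[of X d "Q j"]) simp_all
  then show ?thesis using j(1) by blast
qed

lemma inj_on_NQPR:
  assumes N: "NQPR d Q"
  shows "inj_on Q {..<d\<^sup>2}"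
proof (rule inj_onI)
  fix j k assume "j \<in> {..<d\<^sup>2}" "k \<in> {..<d\<^sup>2}" "Q j = Q k"
  then have "j < d\<^sup>2" "k < d\<^sup>2" "mtrace (Q j * Q k) = of_nat d"
    using NQPR_mtrace_mult[OF N, of k k] by auto
  moreover have "d \<noteq> 0" using \<open>k < d\<^sup>2\<close> by (cases d) auto
  ultimately show "j = k" using NQPR_mtrace_mult[OF N, of j k] by (auto split: if_splits)
qed

lemma image_eq_if_inj_on_image_subset:
  assumes "finite A" "inj_on f A" "f ` A \<subseteq> g ` A"
  shows "f ` A = g ` A"
  using card_seteq[OF finite_imageI[OF assms(1)] assms(3)] card_image[OF assms(2)]
    card_image_le[OF assms(1), of g] by simp

lemma NQPR_mtrace_mult_nonneg_iff_image_eq: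
  assumes Q: "NQPR d Q" and R: "NQPR d R"
  shows "(\<forall>j<d\<^sup>2. \<forall>k<d\<^sup>2. 0 \<le> mtrace (Q j * R k)) \<longleftrightarrow> R ` {..<d\<^sup>2} = Q ` {..<d\<^sup>2}"
proof
  assume "\<forall>j<d\<^sup>2. \<forall>k<d\<^sup>2. 0 \<le> mtrace (Q j * R k)"
  then have "R k \<in> Q ` {..<d\<^sup>2}" if "k < d\<^sup>2" for k
    using NQPR_D[OF R that] NQPR_mtrace_mult[OF R that that] that
    by (intro NQPR_mem_if_mtrace_mult_nonneg[OF Q]) auto
  then show "R ` {..<d\<^sup>2} = Q ` {..<d\<^sup>2}"
    by (intro image_eq_if_inj_on_image_subset inj_on_NQPR[OF R]) auto
next
  assume image: "R ` {..<d\<^sup>2} = Q ` {..<d\<^sup>2}"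
  show "\<forall>j<d\<^sup>2. \<forall>k<d\<^sup>2. 0 \<le> mtrace (Q j * R k)"
  proof (intro allI impI)
    fix j k assume j: "j < d\<^sup>2" and k: "k < d\<^sup>2"
    then obtain i where i: "i < d\<^sup>2" "R k = Q i" using image by force
    then show "0 \<le> mtrace (Q j * R k)"
      using NQPR_mtrace_mult[OF Q j i(1)] by (simp add: less_eq_complex_def)
  qed
qed

theorem theorem5:
  fixes d :: nat and Q :: "nat \<Rightarrow> complex mat" and U :: "complex mat"
  assumes "NQPR d Q" and "unitary_mat d U"
  shows "(\<forall>j<d^2. \<forall>k<d^2. (0::complex) \<le> mtrace (Q j * U * Q k * mat_adjoint U) / of_nat d)
         \<longleftrightarrow> U \<in> symmetry_group d Q"
proof -
  define R where "R k = U * Q k * mat_adjoint U" for k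
  have U: "U \<in> carrier_mat d d" using assms(2) unfolding unitary_mat_def by auto
  have "(0::complex) \<le> mtrace (Q j * U * Q k * mat_adjoint U) / of_nat d \<longleftrightarrow> 0 \<le> mtrace (Q j * R k)"
    if "j < d\<^sup>2" "k < d\<^sup>2" for j k
  proof -
    have "0 < d" using that by (cases d) auto
    then show ?thesis
      using NQPR_D(1)[OF assms(1)] that U carrier_mat_adjoint[OF U]
      by (simp add: R_def assoc_mult_mat[of _ d d _ d _ d] less_eq_complex_def zero_le_divide_iff)
  qed
  then have "(\<forall>j<d\<^sup>2. \<forall>k<d\<^sup>2. (0::complex) \<le> mtrace (Q j * U * Q k * mat_adjoint U) / of_nat d)
      \<longleftrightarrow> R ` {..<d\<^sup>2} = Q ` {..<d\<^sup>2}"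
    using NQPR_mtrace_mult_nonneg_iff_image_eq[OF assms(1) NQPR_unitary_conj[OF assms]]
    unfolding R_def by simp
  also have "\<dots> \<longleftrightarrow> U \<in> symmetry_group d Q"
    using assms(2) unfolding symmetry_group_def R_def by simp
  finally show ?thesis .
qed

end
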